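(* Let $N\in\{\tfrac12,1,\tfrac32,2,\dots\}$, $n\in\{0,1,\dots,\lfloor N+\tfrac12\rfloor\}$, and $\alpha\in\mathbb{C}$ with $\alpha+1$ not a nonpositive integer. Then for all $x\in\mathbb{C}$: $${}_3F_2\!\left(\begin{matrix}-2n,\,2n+2\alpha+1,\,-x-N-\frac12\\ \alpha+1,\,-2N-1\end{matrix};1\right)={}_4F_3\!\left(\begin{matrix}-n,\,n+\alpha+\frac12,\,-x-N-\frac12,\,x-N-\frac12\\ \alpha+1,\,-N-\frac12,\,-N\end{matrix};1\right),$$ i.e. $Q_{2n}(x+N+\tfrac12;\alpha,\alpha,2N+1)=R_n\big(x^2-(N+\tfrac12)^2;\alpha,-\tfrac12,-N-1,-N-1\big)$ in terms of Hahn and Racah polynomials.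
   Context: ${}_rF_s$ is the generalized hypergeometric series with Pochhammer symbols $(c)_k=c(c+1)\cdots(c+k-1)$, terminating here via the numerator $-2n$ resp. $-n$. Hahn: $Q_n(x;\alpha,\beta,N)={}_3F_2(-n,n+\alpha+\beta+1,-x;\alpha+1,-N;1)$. Racah: $R_n(y(y+\gamma+\delta+1);\alpha,\beta,\gamma,\delta)={}_4F_3(-n,n+\alpha+\beta+1,-y,y+\gamma+\delta+1;\alpha+1,\beta+\delta+1,\gamma+1;1)$. *)

theory Defs
  imports Complex_Main
begin

text \<open>Used here only for terminating
  series (some numerator parameter is a nonpositive integer), where all terms
  beyond the terminating index vanish.\<close>
definition hyp_term :: "complex list \<Rightarrow> complex list \<Rightarrow> complex \<Rightarrow> nat \<Rightarrow> complex" where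
  "hyp_term as bs z k =
     (\<Prod>a\<leftarrow>as. pochhammer a k) / (\<Prod>b\<leftarrow>bs. pochhammer b k) * z ^ k / fact k"

definition hypergeom :: "complex list \<Rightarrow> complex list \<Rightarrow> complex \<Rightarrow> complex" where
  "hypergeom as bs z = (\<Sum>k. hyp_term as bs z k)"

end

theory Submission
  imports Defs "HOL-Computational_Algebra.Polynomial"
begin

text \<open>
  Put \<open>t = x + N + 1/2\<close> and \<open>m = 2N + 1\<close>, and let \<open>L\<close> be the linear functional on
  polynomials sending \<open>y\<^sup>j\<close> to \<open>(-t)\<^sub>j / (-m)\<^sub>j\<close>. The left-hand side is \<open>L\<close> applied to the
  polynomial \<open>\<^sub>2F\<^sub>1(-2n, 2n+2\<alpha>+1; \<alpha>+1; y)\<close>. By the quadratic transformation this polynomial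
  equals \<open>\<^sub>2F\<^sub>1(-n, n+\<alpha>+1/2; \<alpha>+1; 4y(1-y))\<close>: both sides are killed by the hypergeometric
  operator with parameters \<open>(-2n, 2n+2\<alpha>+1, \<alpha>+1)\<close> and have constant term 1, and since \<open>\<alpha>+1\<close> is
  not a nonpositive integer this determines a polynomial. Finally, expanding \<open>(4y(1-y))\<^sup>k\<close> and
  summing with Chu--Vandermonde gives \<open>L((4y(1-y))\<^sup>k) = 4\<^sup>k (-t)\<^sub>k (t-m)\<^sub>k / (-m)\<^sub>2\<^sub>k\<close>, and the
  duplication formula \<open>(-m)\<^sub>2\<^sub>k = 4\<^sup>k (-N-1/2)\<^sub>k (-N)\<^sub>k\<close> turns the result into the \<open>\<^sub>4F\<^sub>3\<close>.
\<close>

lemma hyp_term_append: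
  "hyp_term (as @ cs) (bs @ ds) z k =
     hyp_term as bs z k * ((\<Prod>c\<leftarrow>cs. pochhammer c k) / (\<Prod>d\<leftarrow>ds. pochhammer d k))"
  by (simp add: hyp_term_def divide_inverse mult_ac)

lemma hypergeom_terminating:
  assumes "- of_nat K \<in> set as"
  shows "hypergeom as bs z = (\<Sum>k\<le>K. hyp_term as bs z k)"
proof -
  have "hyp_term as bs z k = 0" if "k > K" for k
  proof -
    have "pochhammer (- of_nat K) k = (0::complex)"
      using that by (simp add: pochhammer_of_nat_eq_0_iff)
    then have "(\<Prod>a\<leftarrow>as. pochhammer a k) = 0"
      using assms by (auto simp: prod_list_zero_iff)
    then show ?thesis by (simp add: hyp_term_def)
  qed
  then show ?thesis
    unfolding hypergeom_def by (subst suminf_finite[of "{..K}"]) auto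
qed

lemma hyp_term_2F1_Suc:
  assumes "\<forall>j::nat. c \<noteq> - of_nat j"
  shows "of_nat (Suc k) * (of_nat k + c) * hyp_term [a, b] [c] 1 (Suc k)
       = (of_nat k + a) * (of_nat k + b) * hyp_term [a, b] [c] 1 k"
proof -
  have "pochhammer c k \<noteq> 0" "c + of_nat k \<noteq> 0"
    using assms by (auto simp: pochhammer_eq_0_iff eq_neg_iff_add_eq_0)
  then show ?thesis
    unfolding hyp_term_def pochhammer_Suc fact_Suc
    by (simp add: divide_simps del: of_nat_Suc) (simp add: algebra_simps)
qed

definition hypergeometric_operator :: "'a \<Rightarrow> 'a \<Rightarrow> 'a \<Rightarrow> 'a::idom poly \<Rightarrow> 'a poly" where
  "hypergeometric_operator a b c p =
     [:0, 1, -1:] * pderiv (pderiv p) + [:c, -(a + b + 1):] * pderiv p - smult (a * b) p"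

lemma coeff_hypergeometric_operator:
  "coeff (hypergeometric_operator a b c p) j =
     of_nat (Suc j) * (of_nat j + c) * coeff p (Suc j) - (of_nat j + a) * (of_nat j + b) * coeff p j"
  by (cases j)
    (simp_all add: hypergeometric_operator_def coeff_pderiv coeff_pCons
      algebra_simps split: nat.splits)

lemma hypergeometric_operator_pcompose_quadratic:
  fixes a b c :: "'a::field_char_0"
  assumes "2*a + 2*b + 1 = 2*c"
  shows "hypergeometric_operator (2*a) (2*b) c (p \<circ>\<^sub>p [:0, 4, -4:])
       = smult 4 (hypergeometric_operator a b c p \<circ>\<^sub>p [:0, 4, -4:])"
proof -
  let ?q = "[:0, 4, -4:] :: 'a poly"
  have dq: "pderiv ?q = [:4, -8:]" by (simp add: pderiv_pCons)
  have d1: "pderiv (p \<circ>\<^sub>p ?q) = (pderiv p \<circ>\<^sub>p ?q) * [:4, -8:]"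
    by (simp only: pderiv_pcompose dq)
  have d2: "pderiv (pderiv (p \<circ>\<^sub>p ?q)) =
      (pderiv (pderiv p) \<circ>\<^sub>p ?q) * [:4, -8:] * [:4, -8:] + (pderiv p \<circ>\<^sub>p ?q) * [:-8:]"
    unfolding d1 pderiv_mult pderiv_pcompose dq by (simp add: pderiv_pCons algebra_simps)
  have c: "c = a + b + 1/2" using assms by (simp add: field_simps)
  have "poly (hypergeometric_operator (2*a) (2*b) c (p \<circ>\<^sub>p ?q)) y
      = poly (smult 4 (hypergeometric_operator a b c p \<circ>\<^sub>p ?q)) y" for y
    unfolding hypergeometric_operator_def d2 unfolding d1
    by (simp add: pcompose_mult poly_pcompose c algebra_simps)
  then show ?thesis using poly_eq_poly_eq_iff by blast
qed

lemma hypergeometric_operator_kernel_unique: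
  fixes a b c :: "'a::{idom, ring_char_0}"
  assumes "hypergeometric_operator a b c p = 0" "hypergeometric_operator a b c q = 0"
    and "coeff p 0 = coeff q 0" and "\<forall>j::nat. c \<noteq> - of_nat j"
  shows "p = q"
proof -
  have "coeff p j = coeff q j" for j
  proof (induction j)
    case (Suc j)
    have "of_nat (Suc j) * (of_nat j + c) \<noteq> 0"
      using assms(4) by (simp add: eq_neg_iff_add_eq_0 add.commute del: of_nat_Suc)
    moreover have "of_nat (Suc j) * (of_nat j + c) * coeff p (Suc j)
                 = of_nat (Suc j) * (of_nat j + c) * coeff q (Suc j)"
      using arg_cong[OF assms(1), of "\<lambda>r. coeff r j"] arg_cong[OF assms(2), of "\<lambda>r. coeff r j"]
        Suc
      by (simp add: coeff_hypergeometric_operator del: of_nat_Suc)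
    ultimately show ?case by simp
  qed (use assms in simp)
  then show ?thesis by (simp add: poly_eq_iff)
qed

definition hyp2f1_poly :: "nat \<Rightarrow> complex \<Rightarrow> complex \<Rightarrow> complex poly" where
  "hyp2f1_poly K b c = (\<Sum>k\<le>K. monom (hyp_term [- of_nat K, b] [c] 1 k) k)"

lemma coeff_hyp2f1_poly: "coeff (hyp2f1_poly K b c) k = hyp_term [- of_nat K, b] [c] 1 k"
  by (cases "k \<le> K") (auto simp: hyp2f1_poly_def coeff_sum hyp_term_def pochhammer_of_nat_eq_0_iff)

lemma hypergeometric_operator_hyp2f1_poly:
  assumes "\<forall>j::nat. c \<noteq> - of_nat j"
  shows "hypergeometric_operator (- of_nat K) b c (hyp2f1_poly K b c) = 0"
  by (rule poly_eqI)
    (simp add: coeff_hypergeometric_operator coeff_hyp2f1_poly hyp_term_2F1_Suc[OF assms]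
      del: of_nat_Suc)

lemma hyp2f1_poly_quadratic_transformation:
  assumes "\<forall>j::nat. c \<noteq> - of_nat j" and "2*b + 1 = 2*c + 2*of_nat K"
  shows "hyp2f1_poly (2*K) (2*b) c = hyp2f1_poly K b c \<circ>\<^sub>p [:0, 4, -4:]"
proof (rule hypergeometric_operator_kernel_unique[OF _ _ _ assms(1)])
  show "hypergeometric_operator (- of_nat (2*K)) (2*b) c (hyp2f1_poly (2*K) (2*b) c) = 0"
    by (rule hypergeometric_operator_hyp2f1_poly[OF assms(1)])
  have "2 * (- of_nat K) + 2*b + 1 = 2*c" using assms(2) by (simp add: algebra_simps)
  from hypergeometric_operator_pcompose_quadratic[OF this, of "hyp2f1_poly K b c"]
  show "hypergeometric_operator (- of_nat (2*K)) (2*b) c (hyp2f1_poly K b c \<circ>\<^sub>p [:0, 4, -4:]) = 0"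
    by (simp add: hypergeometric_operator_hyp2f1_poly[OF assms(1)])
  have "coeff (p \<circ>\<^sub>p [:0, 4, -4:]) 0 = coeff p 0" for p :: "complex poly"
    by (simp add: poly_0_coeff_0[symmetric] poly_pcompose)
  then show "coeff (hyp2f1_poly (2*K) (2*b) c) 0 = coeff (hyp2f1_poly K b c \<circ>\<^sub>p [:0, 4, -4:]) 0"
    by (simp add: coeff_hyp2f1_poly hyp_term_def)
qed

definition coeff_functional :: "(nat \<Rightarrow> 'a::comm_semiring_0) \<Rightarrow> nat \<Rightarrow> 'a poly \<Rightarrow> 'a" where
  "coeff_functional w K p = (\<Sum>j\<le>K. coeff p j * w j)"

lemma coeff_functional_sum:
  "coeff_functional w K (\<Sum>i\<in>A. p i) = (\<Sum>i\<in>A. coeff_functional w K (p i))"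
  unfolding coeff_functional_def coeff_sum sum_distrib_right by (rule sum.swap)

lemma coeff_functional_smult: "coeff_functional w K (smult a p) = a * coeff_functional w K p"
  by (simp add: coeff_functional_def sum_distrib_left mult.assoc)

lemma coeff_functional_monom: "j \<le> K \<Longrightarrow> coeff_functional w K (monom a j) = a * w j"
proof -
  assume "j \<le> K"
  have "coeff_functional w K (monom a j) = (\<Sum>i\<le>K. if i = j then a * w i else 0)"
    unfolding coeff_functional_def by (rule sum.cong) auto
  with \<open>j \<le> K\<close> show ?thesis by simp
qed

lemma pcompose_monom: "monom a k \<circ>\<^sub>p q = smult a (q ^ k)"
  by (induction k) (simp_all add: monom_0 monom_Suc pcompose_pCons)

lemma quadratic_power_as_sum_of_monoms:
  "([:0, 4, -4:] :: 'a::{comm_ring_1, ring_no_zero_divisors, ring_char_0} poly) ^ k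
     = (\<Sum>l\<le>k. monom (4^k * (-1)^l * of_nat (k choose l)) (k + l))"
proof -
  have "poly ([:0, 4, -4:] ^ k) y = poly (\<Sum>l\<le>k. monom (4^k * (-1)^l * of_nat (k choose l)) (k + l)) y"
    for y :: 'a
  proof -
    have "poly [:0, 4, -4:] y = 4 * y * (-y + 1)" by (simp add: algebra_simps)
    then have "poly ([:0, 4, -4:] ^ k) y = 4^k * y^k * (-y + 1)^k"
      by (simp only: poly_power power_mult_distrib)
    also have "(-y + 1)^k = (\<Sum>l\<le>k. of_nat (k choose l) * (-y)^l * 1^(k - l))"
      by (rule binomial_ring)
    also have "4^k * y^k * \<dots> = (\<Sum>l\<le>k. 4^k * (-1)^l * of_nat (k choose l) * y^(k + l))"
      unfolding sum_distrib_left
      by (intro sum.cong refl) (simp add: power_minus[of y] power_add mult_ac)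
    finally show ?thesis by (simp add: poly_sum poly_monom)
  qed
  then show ?thesis using poly_eq_poly_eq_iff by blast
qed

lemma pochhammer_binomial_sum_alternating:
  fixes t m :: "'a::comm_ring_1"
  shows "(\<Sum>l\<le>k. of_nat (k choose l) * (-1)^l * pochhammer (of_nat k - t) l
            * pochhammer (of_nat (k + l) - m) (k - l)) = pochhammer (t - m) k"
proof -
  have "pochhammer (t - m) k = (-1)^k * pochhammer ((of_nat k - t) + (m - 2 * of_nat k + 1)) k"
    using pochhammer_minus[of "m - t" k] by (simp add: algebra_simps)
  also have "\<dots> = (\<Sum>l\<le>k. (-1)^k * (of_nat (k choose l) * pochhammer (of_nat k - t) l
                      * pochhammer (m - 2 * of_nat k + 1) (k - l)))"
    by (subst pochhammer_binomial_sum) (simp add: sum_distrib_left)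
  also have "\<dots> = (\<Sum>l\<le>k. of_nat (k choose l) * (-1)^l * pochhammer (of_nat k - t) l
                      * pochhammer (of_nat (k + l) - m) (k - l))"
  proof (rule sum.cong[OF refl])
    fix l assume "l \<in> {..k}"
    then have "l \<le> k" by simp
    have "pochhammer (of_nat (k + l) - m) (k - l)
        = (-1)^(k - l) * pochhammer (m - 2 * of_nat k + 1) (k - l)"
      using pochhammer_minus[of "m - of_nat (k + l)" "k - l"] \<open>l \<le> k\<close>
      by (simp add: of_nat_diff algebra_simps)
    moreover have "(-1::'a)^k = (-1)^l * (-1)^(k - l)"
      using \<open>l \<le> k\<close> by (simp flip: power_add)
    ultimately show "(-1)^k * (of_nat (k choose l) * pochhammer (of_nat k - t) l
          * pochhammer (m - 2 * of_nat k + 1) (k - l))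
        = of_nat (k choose l) * (-1)^l * pochhammer (of_nat k - t) l
          * pochhammer (of_nat (k + l) - m) (k - l)"
      by (simp add: algebra_simps)
  qed
  finally show ?thesis ..
qed

lemma binomial_sum_pochhammer_ratio:
  fixes t m :: "'a::field"
  assumes "pochhammer (-m) (2*k) \<noteq> 0"
  shows "(\<Sum>l\<le>k. (-1)^l * of_nat (k choose l) * (pochhammer (-t) (k + l) / pochhammer (-m) (k + l)))
       = pochhammer (-t) k * pochhammer (t - m) k / pochhammer (-m) (2*k)"
proof -
  have "(\<Sum>l\<le>k. (-1)^l * of_nat (k choose l) * (pochhammer (-t) (k + l) / pochhammer (-m) (k + l)))
      = (\<Sum>l\<le>k. pochhammer (-t) k / pochhammer (-m) (2*k) * (of_nat (k choose l) * (-1)^l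
            * pochhammer (of_nat k - t) l * pochhammer (of_nat (k + l) - m) (k - l)))"
  proof (rule sum.cong[OF refl])
    fix l assume "l \<in> {..k}"
    then have split_m: "pochhammer (-m) (2*k)
        = pochhammer (-m) (k + l) * pochhammer (of_nat (k + l) - m) (k - l)"
      using pochhammer_product[of "k + l" "2*k" "-m"] by simp
    have split_t: "pochhammer (-t) (k + l) = pochhammer (-t) k * pochhammer (of_nat k - t) l"
      using pochhammer_product'[of "-t" k l] by simp
    show "(-1)^l * of_nat (k choose l) * (pochhammer (-t) (k + l) / pochhammer (-m) (k + l))
        = pochhammer (-t) k / pochhammer (-m) (2*k) * (of_nat (k choose l) * (-1)^l
            * pochhammer (of_nat k - t) l * pochhammer (of_nat (k + l) - m) (k - l))"
      using assms unfolding split_m split_t by (simp add: field_simps)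
  qed
  also have "\<dots> = pochhammer (-t) k / pochhammer (-m) (2*k) * pochhammer (t - m) k"
    by (simp only: sum_distrib_left[symmetric] pochhammer_binomial_sum_alternating)
  finally show ?thesis by simp
qed

lemma coeff_functional_quadratic_power:
  fixes t m :: "'a::field_char_0"
  assumes "2*k \<le> K" and "pochhammer (-m) (2*k) \<noteq> 0"
  shows "coeff_functional (\<lambda>j. pochhammer (-t) j / pochhammer (-m) j) K ([:0, 4, -4:] ^ k)
       = 4^k * pochhammer (-t) k * pochhammer (t - m) k / pochhammer (-m) (2*k)"
proof -
  have "coeff_functional (\<lambda>j. pochhammer (-t) j / pochhammer (-m) j) K ([:0, 4, -4:] ^ k)
      = 4^k * (\<Sum>l\<le>k. (-1)^l * of_nat (k choose l) * (pochhammer (-t) (k + l) / pochhammer (-m) (k + l)))"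
    using assms(1)
    by (simp add: quadratic_power_as_sum_of_monoms coeff_functional_sum coeff_functional_monom
        sum_distrib_left mult_ac del: times_divide_eq_right)
  also have "\<dots> = 4^k * (pochhammer (-t) k * pochhammer (t - m) k / pochhammer (-m) (2*k))"
    by (simp only: binomial_sum_pochhammer_ratio[OF assms(2)])
  finally show ?thesis by simp
qed

lemma pochhammer_half_shift_product:
  fixes z :: "'a::field_char_0"
  shows "pochhammer (z - 1/2) k * pochhammer z k = pochhammer (2*z - 1) (2*k) / 4^k"
proof -
  have "(of_nat (2 ^ (2*k)) :: 'a) = 4^k" by (simp add: power_mult)
  moreover have "2 * (z - 1/2) = 2*z - 1" "z - 1/2 + 1/2 = z" by (simp_all add: algebra_simps)
  ultimately show ?thesis using pochhammer_double[of "z - 1/2" k] by (simp add: mult_ac)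
qed

theorem mainTheorem15:
  fixes M n :: nat and \<alpha> x N :: complex
  assumes "M \<ge> 1"
    and "N = of_nat M / 2"
    and "n \<le> (M + 1) div 2"
    and "\<forall>k::nat. \<alpha> + 1 \<noteq> - of_nat k"
  shows "hypergeom [- of_nat (2*n), of_nat (2*n) + 2*\<alpha> + 1, - x - N - 1/2]
                   [\<alpha> + 1, - 2*N - 1] 1
       = hypergeom [- of_nat n, of_nat n + \<alpha> + 1/2, - x - N - 1/2, x - N - 1/2]
                   [\<alpha> + 1, - N - 1/2, - N] 1"
proof -
  define m t where "m = 2*N + 1" and "t = x + N + 1/2"
  define b where "b = of_nat n + \<alpha> + 1/2"
  let ?w = "\<lambda>j. pochhammer (-t) j / pochhammer (-m) j"
  have params: "of_nat (2*n) + 2*\<alpha> + 1 = 2*b" "- x - N - 1/2 = -t" "- 2*N - 1 = -m"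
      "x - N - 1/2 = t - m" "2*b + 1 = 2*(\<alpha> + 1) + 2*of_nat n"
    unfolding m_def t_def b_def by (simp_all add: algebra_simps)
  \<comment> \<open>Here \<open>n \<le> \<lfloor>N + 1/2\<rfloor>\<close> is used.\<close>
  have "m = of_nat (Suc M)" unfolding m_def assms(2) by simp
  then have nonzero: "pochhammer (-m) (2*k) \<noteq> 0" if "k \<le> n" for k
    using that assms(3) pochhammer_of_nat_eq_0_iff[of "Suc M" "2*k", where 'a=complex] by simp
  have "hypergeom [- of_nat (2*n), 2*b, -t] [\<alpha> + 1, -m] 1
      = (\<Sum>j\<le>2*n. hyp_term [- of_nat (2*n), 2*b] [\<alpha> + 1] 1 j * ?w j)"
    using hypergeom_terminating[of "2*n"]
      hyp_term_append[of "[- of_nat (2*n), 2*b]" "[-t]" "[\<alpha> + 1]" "[-m]"]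
    by simp
  also have "\<dots> = coeff_functional ?w (2*n) (hyp2f1_poly (2*n) (2*b) (\<alpha> + 1))"
    by (simp add: hyp2f1_poly_def coeff_functional_sum coeff_functional_monom)
  also have "\<dots> = coeff_functional ?w (2*n) (hyp2f1_poly n b (\<alpha> + 1) \<circ>\<^sub>p [:0, 4, -4:])"
    by (simp only: hyp2f1_poly_quadratic_transformation[OF assms(4) params(5)])
  also have "\<dots> = (\<Sum>k\<le>n. hyp_term [- of_nat n, b] [\<alpha> + 1] 1 k
                         * coeff_functional ?w (2*n) ([:0, 4, -4:] ^ k))"
    by (simp add: hyp2f1_poly_def pcompose_sum pcompose_monom
        coeff_functional_sum coeff_functional_smult)
  also have "\<dots> = (\<Sum>k\<le>n. hyp_term [- of_nat n, b] [\<alpha> + 1] 1 k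
                         * (4^k * pochhammer (-t) k * pochhammer (t - m) k / pochhammer (-m) (2*k)))"
    by (simp add: coeff_functional_quadratic_power nonzero)
  also have "\<dots> = hypergeom [- of_nat n, b, -t, t - m] [\<alpha> + 1, - N - 1/2, - N] 1"
    using hypergeom_terminating[of n]
      hyp_term_append[of "[- of_nat n, b]" "[-t, t - m]" "[\<alpha> + 1]" "[- N - 1/2, - N]"]
      pochhammer_half_shift_product[of "-N"]
    by (simp add: m_def mult_ac)
  finally show ?thesis unfolding params b_def .
qed

end
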